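(* Let $N$ be a nontrivial normal subgroup of $G_2$. If $\phi(N)\simeq A_8$, then $N=L$, where $L$ is the set of elements of $G_2$ expressible as a word of even length in the generators $u,d,f,b,l,r$ and their inverses.
   Context: The $2\times2\times2$ Rubik's cube consists of 8 corner cubelets, each carrying 3 colored stickers. Corner positions are numbered 1 = top-front-left, 2 = top-front-right, 3 = top-back-left, 4 = top-back-right, 5 = bottom-front-left, 6 = bottom-front-right, 7 = bottom-back-left, 8 = bottom-back-right. $G_2$ is the subgroup of the symmetric group on the 24 stickers generated by the six moves $u,d,f,b,l,r$ rotating respectively the top, bottom, front, back, left, right layer of four cubelets by $90^\circ$ clockwise as seen from outside facing that face. $\phi:G_2\to S_8$ records the permutation of corner positions. *)

theory Defs
  imports "HOL-Algebra.Algebra"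
begin

text \<open>Coordinates: x = +1 right / -1 left,
  y = +1 back / -1 front, z = +1 top / -1 bottom. A corner position is a vector
  in {-1,1}^3; a sticker is a pair (p, m) of a corner position p and the outward
  unit normal m of the face it lies on.\<close>

type_synonym vec3 = "int \<times> int \<times> int"
type_synonym sticker = "vec3 \<times> vec3"

definition dot3 :: "vec3 \<Rightarrow> vec3 \<Rightarrow> int" where
  "dot3 a b = (case a of (a1,a2,a3) \<Rightarrow> case b of (b1,b2,b3) \<Rightarrow> a1*b1 + a2*b2 + a3*b3)"

definition cross3 :: "vec3 \<Rightarrow> vec3 \<Rightarrow> vec3" where
  "cross3 a b = (case a of (a1,a2,a3) \<Rightarrow> case b of (b1,b2,b3) \<Rightarrow>
      (a2*b3 - a3*b2, a3*b1 - a1*b3, a1*b2 - a2*b1))"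

definition scal3 :: "int \<Rightarrow> vec3 \<Rightarrow> vec3" where
  "scal3 c a = (case a of (a1,a2,a3) \<Rightarrow> (c*a1, c*a2, c*a3))"

definition sub3 :: "vec3 \<Rightarrow> vec3 \<Rightarrow> vec3" where
  "sub3 a b = (case a of (a1,a2,a3) \<Rightarrow> case b of (b1,b2,b3) \<Rightarrow> (a1-b1, a2-b2, a3-b3))"

text \<open>Rotation by 90 degrees clockwise as seen from outside, looking at the face
  with outward unit normal n (i.e. rotation by -90 degrees about n):
  v \<mapsto> (n.v) n - n \<times> v.\<close>
definition rot_cw :: "vec3 \<Rightarrow> vec3 \<Rightarrow> vec3" where
  "rot_cw n v = sub3 (scal3 (dot3 n v) n) (cross3 n v)"

definition corners :: "vec3 set" where
  "corners = {(x,y,z). x \<in> {-1,1} \<and> y \<in> {-1,1} \<and> z \<in> {-1,1}}"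

definition stickers :: "sticker set" where
  "stickers = {(p,m). p \<in> corners \<and>
      (case p of (x,y,z) \<Rightarrow> m \<in> {(x,0,0), (0,y,0), (0,0,z)})}"

definition face_move :: "vec3 \<Rightarrow> sticker \<Rightarrow> sticker" where
  "face_move n = restrict (\<lambda>(p,m). if dot3 p n = 1 then (rot_cw n p, rot_cw n m) else (p,m)) stickers"

definition mv_u :: "sticker \<Rightarrow> sticker" where "mv_u = face_move (0,0,1)"
definition mv_d :: "sticker \<Rightarrow> sticker" where "mv_d = face_move (0,0,-1)"
definition mv_f :: "sticker \<Rightarrow> sticker" where "mv_f = face_move (0,-1,0)"
definition mv_b :: "sticker \<Rightarrow> sticker" where "mv_b = face_move (0,1,0)"
definition mv_l :: "sticker \<Rightarrow> sticker" where "mv_l = face_move (-1,0,0)"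
definition mv_r :: "sticker \<Rightarrow> sticker" where "mv_r = face_move (1,0,0)"

definition cube_moves :: "(sticker \<Rightarrow> sticker) set" where
  "cube_moves = {mv_u, mv_d, mv_f, mv_b, mv_l, mv_r}"

abbreviation SymSt :: "(sticker \<Rightarrow> sticker) monoid" where
  "SymSt \<equiv> BijGroup stickers"

definition G2_set :: "(sticker \<Rightarrow> sticker) set" where
  "G2_set = generate SymSt cube_moves"

definition G2 :: "(sticker \<Rightarrow> sticker) monoid" where
  "G2 = SymSt \<lparr>carrier := G2_set\<rparr>"

text \<open>Corner numbering: 1 TFL, 2 TFR, 3 TBL, 4 TBR, 5 BFL, 6 BFR, 7 BBL, 8 BBR.\<close>
definition corner_index :: "vec3 \<Rightarrow> nat" where
  "corner_index p = (case p of (x,y,z) \<Rightarrow>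
      1 + (if x = 1 then 1 else 0) + (if y = 1 then 2 else 0) + (if z = -1 then 4 else 0))"

definition corner_pos :: "nat \<Rightarrow> vec3" where
  "corner_pos i = (THE p. p \<in> corners \<and> corner_index p = i)"

text \<open>phi: G_2 \<rightarrow> S_8, the permutation of corner positions: the cubelet at position i
  (tracked via its sticker with vertical normal) is sent to position phi g i.\<close>
definition phi :: "(sticker \<Rightarrow> sticker) \<Rightarrow> nat \<Rightarrow> nat" where
  "phi g = (\<lambda>i. if i \<in> {1..8} then
       corner_index (fst (g (corner_pos i, (0, 0, snd (snd (corner_pos i))))))
     else i)"

definition word_eval :: "(sticker \<Rightarrow> sticker) list \<Rightarrow> (sticker \<Rightarrow> sticker)" where
  "word_eval w = foldr (\<lambda>a b. a \<otimes>\<^bsub>SymSt\<^esub> b) w \<one>\<^bsub>SymSt\<^esub>"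

definition L_set :: "(sticker \<Rightarrow> sticker) set" where
  "L_set = {word_eval w | w. set w \<subseteq> cube_moves \<union> (\<lambda>g. inv\<^bsub>SymSt\<^esub> g) ` cube_moves
                            \<and> even (length w)}"

end

theory Submission
  imports Defs
begin

text \<open>Every element of \<open>G\<^sub>2\<close> moves cubelets rigidly, i.e. commutes with the twist that
  cycles the three stickers of a cubelet. Hence \<open>\<phi>\<close> is a homomorphism, and the orientations of
  the eight cubelets add up, mod 3, to a total twist that vanishes on all of \<open>G\<^sub>2\<close>. A quarter
  turn is a 4-cycle of corners, so \<open>\<phi> g\<close> is even exactly for words of even length:
  \<open>L = \<phi>\<^sup>-\<^sup>1(A\<^sub>8)\<close>. An index-two subgroup of \<open>S\<^sub>8\<close> contains all squares, hence all
  3-cycles, so \<open>\<phi>(N) = A\<^sub>8\<close>, and it remains to show \<open>ker \<phi> \<subseteq> N\<close>. The kernel consists of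
  pure corner twists of total twist 0. A fixed word twists corners 1 and 2 in opposite senses;
  its commutators with elements of \<open>N\<close> acting as 3-cycles that fix corner 2 twist a corner \<open>j\<close>
  against corner 1, and these generate all pure twists of total twist 0.\<close>

lemma BijGroup_mult_apply:
  "f \<in> Bij S \<Longrightarrow> g \<in> Bij S \<Longrightarrow> x \<in> S \<Longrightarrow> (f \<otimes>\<^bsub>BijGroup S\<^esub> g) x = f (g x)"
  by (simp add: BijGroup_def compose_def)

lemma BijGroup_one_apply: "x \<in> S \<Longrightarrow> \<one>\<^bsub>BijGroup S\<^esub> x = x"
  by (simp add: BijGroup_def)

lemma BijGroup_inv_apply:
  assumes "f \<in> Bij S" "x \<in> S"
  shows "(inv\<^bsub>BijGroup S\<^esub> f) (f x) = x" "f ((inv\<^bsub>BijGroup S\<^esub> f) x) = x"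
  using assms by (auto simp: inv_BijGroup Bij_def bij_betw_def inv_into_into f_inv_into_f)

lemma Bij_eqI: "f \<in> Bij S \<Longrightarrow> g \<in> Bij S \<Longrightarrow> (\<And>x. x \<in> S \<Longrightarrow> f x = g x) \<Longrightarrow> f = g"
  by (blast intro: extensionalityI Bij_imp_extensional)

lemma (in group) square_in_index_two_subgroup:
  assumes fin: "finite (carrier G)" and H: "subgroup H G" and index: "2 * card H = order G"
    and x: "x \<in> carrier G"
  shows "x \<otimes> x \<in> H"
proof (rule ccontr)
  assume sq: "x \<otimes> x \<notin> H"
  then have xH: "x \<notin> H" using subgroup.m_closed[OF H] by blast
  have "card H > 0"
    using subgroup.one_closed[OF H] finite_subset[OF subgroup.subset[OF H] fin] card_gt_0_iff by blast
  then have "card (rcosets H) = 2" using lagrange[OF H] index by (metis mult_right_cancel neq0_conv)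
  moreover have "H \<in> rcosets H" "H #> x \<in> rcosets H"
    using subgroup.subgroup_in_rcosets[OF H is_group] rcosetsI[OF subgroup.subset[OF H] x] .
  moreover have "H \<noteq> H #> x" using rcos_self[OF x H] xH by blast
  ultimately have "rcosets H = {H, H #> x}" by (auto simp: card_2_iff)
  then have "x \<otimes> x \<in> H #> x" using rcosets_part_G[OF H] m_closed[OF x x] sq by auto
  then obtain h where h: "h \<in> H" "x \<otimes> x = h \<otimes> x" unfolding r_coset_def by auto
  then have "x = h" using right_cancel[OF x x] subgroup.mem_carrier[OF H] by blast
  then show False using xH h(1) by simp
qed

lemma sym_group_index_two_subgroup_eq_alt:
  assumes H: "subgroup H (sym_group n)" and index: "2 * card H = fact n"
  shows "H = carrier (alt_group n)"
proof -
  interpret S: group "sym_group n" by (rule sym_group_is_group)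
  have fin: "finite (carrier (sym_group n))"
    by (simp add: sym_group_def finite_permutations)
  have order: "2 * card H = order (sym_group n)"
    using index by (simp add: order_def sym_group_card_carrier)
  have "three_cycles n \<subseteq> H"
  proof
    fix p assume "p \<in> three_cycles n"
    then obtain cs where cs: "p = cycle_of_list cs" "cycle cs" "length cs = 3" "set cs \<subseteq> {1..n}"
      by blast
    then obtain a b c where "cs = [a, b, c]" using stupid_lemma by blast
    then have p: "p = cycle_of_list [a, b, c]" "distinct [a, b, c]" and abc: "{a, b, c} \<subseteq> {1..n}"
      using cs by auto
    have q: "cycle_of_list [a, c, b] \<in> carrier (sym_group n)"
      using permutes_subset[OF cycle_permutes[of "[a, c, b]"]] abc
      by (simp add: sym_group_carrier insert_commute)
    have "p = cycle_of_list [a, c, b] \<circ> cycle_of_list [a, c, b]"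
      using p by (auto simp: transpose_def)
    then show "p \<in> H"
      using S.square_in_index_two_subgroup[OF fin H order q] by (simp add: sym_group_mult)
  qed
  then have "generate (sym_group n) (three_cycles n) \<subseteq> H"
    by (rule S.generate_subgroup_incl[OF _ H])
  moreover have "generate (alt_group n) (three_cycles n) = generate (sym_group n) (three_cycles n)"
    using S.generate_consistent[OF three_cycles_incl alt_group_is_subgroup]
    by (simp add: alt_group_def)
  ultimately have alt_H: "carrier (alt_group n) \<subseteq> H"
    using alt_group_carrier_as_three_cycles[of n] by simp
  have "n \<ge> 2"
  proof (rule ccontr)
    assume "\<not> n \<ge> 2"
    then have "n = 0 \<or> n = 1" by auto
    then have "fact n = (1 :: nat)" by auto
    then show False using index by presburger
  qed
  then have "card (carrier (alt_group n)) = card H" using alt_group_card_carrier index by force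
  moreover have "finite H" using finite_subset[OF subgroup.subset[OF H] fin] .
  ultimately show ?thesis using card_subset_eq[OF _ alt_H] by simp
qed

lemma (in group_hom) preimage_image_eq_if_kernel_subset:
  assumes N: "subgroup N G" and ker: "kernel G H h \<subseteq> N"
  shows "{g \<in> carrier G. h g \<in> h ` N} = N"
proof
  show "N \<subseteq> {g \<in> carrier G. h g \<in> h ` N}" using subgroup.subset[OF N] by auto
  show "{g \<in> carrier G. h g \<in> h ` N} \<subseteq> N"
  proof clarify
    fix g n assume g: "g \<in> carrier G" and n: "n \<in> N" and eq: "h g = h n"
    have nG: "n \<in> carrier G" using subgroup.mem_carrier[OF N n] .
    have "h (inv\<^bsub>G\<^esub> n \<otimes>\<^bsub>G\<^esub> g) = \<one>\<^bsub>H\<^esub>" using g nG eq by simp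
    then have "inv\<^bsub>G\<^esub> n \<otimes>\<^bsub>G\<^esub> g \<in> N" using ker g nG by (auto simp: kernel_def)
    then have "n \<otimes>\<^bsub>G\<^esub> (inv\<^bsub>G\<^esub> n \<otimes>\<^bsub>G\<^esub> g) \<in> N" using subgroup.m_closed[OF N n] by blast
    then show "g \<in> N" using g nG by (simp add: G.m_assoc[symmetric])
  qed
qed

section \<open>Stickers and the twist of a cubelet\<close>

lemma mem_stickers:
  "((x, y, z), m) \<in> stickers \<longleftrightarrow>
     x \<in> {-1, 1} \<and> y \<in> {-1, 1} \<and> z \<in> {-1, 1} \<and> m \<in> {(x, 0, 0), (0, y, 0), (0, 0, z)}"
  unfolding stickers_def corners_def by auto

lemma ball_stickers:
  "(\<forall>s\<in>stickers. P s) \<longleftrightarrow>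
     (\<forall>x\<in>{-1, 1}. \<forall>y\<in>{-1, 1}. \<forall>z\<in>{-1, 1}. \<forall>m\<in>{(x, 0, 0), (0, y, 0), (0, 0, z)}. P ((x, y, z), m))"
  unfolding stickers_def corners_def by fastforce

lemma corners_enum:
  "corners = {(-1, -1, 1), (1, -1, 1), (-1, 1, 1), (1, 1, 1),
              (-1, -1, -1), (1, -1, -1), (-1, 1, -1), (1, 1, -1)}"
  unfolding corners_def by auto

lemma atLeastAtMost_1_8: "{1..8::nat} = {1, 2, 3, 4, 5, 6, 7, 8}"
  by auto

lemma face_move_apply:
  "face_move n ((x, y, z), m) =
     (if ((x, y, z), m) \<in> stickers then
        if dot3 (x, y, z) n = 1 then (rot_cw n (x, y, z), rot_cw n m) else ((x, y, z), m)
      else undefined)"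
  unfolding face_move_def by simp

lemma rot_cw_eq:
  "rot_cw (a, b, c) (x, y, z) =
     ((a*x + b*y + c*z) * a - (b*z - c*y), (a*x + b*y + c*z) * b - (c*x - a*z),
      (a*x + b*y + c*z) * c - (a*y - b*x))"
  by (simp add: rot_cw_def dot3_def cross3_def scal3_def sub3_def)

lemmas cube_move_eval = mv_u_def mv_d_def mv_f_def mv_b_def mv_l_def mv_r_def
  face_move_apply mem_stickers rot_cw_eq dot3_def

text \<open>The next sticker of the same cubelet, turning counterclockwise as seen from outside
  the corner; the sign of \<open>x * y * z\<close> corrects for the handedness of the axes at that corner.\<close>
definition twist :: "sticker \<Rightarrow> sticker" where
  "twist s = (case s of ((x, y, z), (m1, m2, m3)) \<Rightarrow>
     if x * y * z = 1 then ((x, y, z), (x*z*m3, y*x*m1, z*y*m2))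
     else ((x, y, z), (x*y*m2, y*z*m3, z*x*m1)))"

lemma twist_in_stickers [rule_format]: "\<forall>s\<in>stickers. twist s \<in> stickers"
  by (simp only: ball_stickers) (simp add: twist_def mem_stickers)

lemma fst_twist [rule_format]: "\<forall>s\<in>stickers. fst (twist s) = fst s"
  by (simp only: ball_stickers) (simp add: twist_def)

lemma twist_pow_3 [rule_format]: "\<forall>s\<in>stickers. (twist ^^ 3) s = s"
  by (simp only: ball_stickers) (simp add: twist_def numeral_3_eq_3)

lemma cube_moves_commute_twist [rule_format]:
  "\<forall>m\<in>cube_moves. \<forall>s\<in>stickers. m (twist s) = twist (m s)"
  unfolding cube_moves_def
  by (simp only: ball_simps ball_stickers) (simp add: cube_move_eval twist_def)

lemma cube_moves_order_4 [rule_format]: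
  "\<forall>m\<in>cube_moves. \<forall>s\<in>stickers. m s \<in> stickers \<and> m (m (m (m s))) = s"
  unfolding cube_moves_def
  by (simp only: ball_simps ball_stickers) (simp add: cube_move_eval)

definition vert_sticker :: "vec3 \<Rightarrow> sticker" where
  "vert_sticker p = (p, (0, 0, snd (snd p)))"

definition orientation :: "sticker \<Rightarrow> nat" where
  "orientation s = (if s = vert_sticker (fst s) then 0
     else if s = twist (vert_sticker (fst s)) then 1 else 2)"

lemma sticker_from_orientation [rule_format]:
  "\<forall>s\<in>stickers. s = (twist ^^ orientation s) (vert_sticker (fst s))"
  by (simp only: ball_stickers) (simp add: orientation_def vert_sticker_def twist_def numeral_2_eq_2)

lemma orientation_twist [rule_format]:
  "\<forall>s\<in>stickers. orientation (twist s) = Suc (orientation s) mod 3"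
  by (simp only: ball_stickers) (simp add: orientation_def vert_sticker_def twist_def)

lemma vert_sticker_in_stickers [rule_format]: "\<forall>p\<in>corners. vert_sticker p \<in> stickers"
  by (simp add: corners_enum vert_sticker_def mem_stickers)

lemma fst_vert_sticker [simp]: "fst (vert_sticker p) = p"
  by (simp add: vert_sticker_def)

lemma fst_in_corners: "s \<in> stickers \<Longrightarrow> fst s \<in> corners"
  unfolding stickers_def by auto

lemma twist_pow_in_stickers:
  "s \<in> stickers \<Longrightarrow> (twist ^^ n) s \<in> stickers \<and> fst ((twist ^^ n) s) = fst s"
  by (induct n) (auto simp: twist_in_stickers fst_twist)

lemma twist_pow_mod: "s \<in> stickers \<Longrightarrow> (twist ^^ n) s = (twist ^^ (n mod 3)) s"
  by (simp add: funpow_mod_eq twist_pow_3)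

lemma orientation_less_3: "orientation s < 3"
  by (simp add: orientation_def)

lemma orientation_twist_pow:
  "s \<in> stickers \<Longrightarrow> orientation ((twist ^^ n) s) = (orientation s + n) mod 3"
proof (induct n)
  case 0
  then show ?case using orientation_less_3[of s] by simp
next
  case (Suc n)
  then show ?case using orientation_twist twist_pow_in_stickers by (simp add: mod_Suc_eq)
qed

lemma corner_index_inj [rule_format]:
  "\<forall>p\<in>corners. \<forall>q\<in>corners. corner_index p = corner_index q \<longrightarrow> p = q"
  by (simp add: corners_enum corner_index_def)

lemma corner_index_range [rule_format]: "\<forall>p\<in>corners. corner_index p \<in> {1..8}"
  by (simp add: corners_enum corner_index_def)

lemma corner_index_image: "corner_index ` corners = {1..8}"
  unfolding atLeastAtMost_1_8 by (auto simp: corners_enum corner_index_def)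

lemma corner_pos_spec:
  assumes "i \<in> {1..8}"
  shows "corner_pos i \<in> corners" "corner_index (corner_pos i) = i"
proof -
  obtain p where "p \<in> corners" "corner_index p = i"
    using assms by (metis corner_index_image imageE)
  then have "\<exists>!p. p \<in> corners \<and> corner_index p = i"
    using corner_index_inj by blast
  then have "corner_pos i \<in> corners \<and> corner_index (corner_pos i) = i"
    unfolding corner_pos_def by (rule theI')
  then show "corner_pos i \<in> corners" "corner_index (corner_pos i) = i" by auto
qed

lemma corner_pos_corner_index: "p \<in> corners \<Longrightarrow> corner_pos (corner_index p) = p"
  using corner_pos_spec corner_index_inj corner_index_range by metis

lemma bij_betw_corner_pos: "bij_betw corner_pos {1..8} corners"
  by (rule bij_betw_byWitness[where f' = corner_index])
    (use corner_pos_spec corner_pos_corner_index corner_index_range in blast)+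

lemma vert_sticker_corner_pos: "i \<in> {1..8} \<Longrightarrow> vert_sticker (corner_pos i) \<in> stickers"
  using vert_sticker_in_stickers corner_pos_spec by blast

interpretation Sym: group SymSt
  by (rule group_BijGroup)

lemma carrier_SymSt: "carrier SymSt = Bij stickers"
  by (simp add: BijGroup_def)

definition rigid :: "(sticker \<Rightarrow> sticker) \<Rightarrow> bool" where
  "rigid g \<longleftrightarrow> g \<in> Bij stickers \<and> (\<forall>s\<in>stickers. g (twist s) = twist (g s))"

lemma rigid_Bij: "rigid g \<Longrightarrow> g \<in> Bij stickers"
  by (simp add: rigid_def)

lemma rigid_carrier: "rigid g \<Longrightarrow> g \<in> carrier SymSt"
  by (simp add: rigid_def carrier_SymSt)

lemma rigid_in_stickers: "rigid g \<Longrightarrow> s \<in> stickers \<Longrightarrow> g s \<in> stickers"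
  unfolding rigid_def using Bij_imp_funcset by blast

lemma rigid_twist_pow: "rigid g \<Longrightarrow> s \<in> stickers \<Longrightarrow> g ((twist ^^ n) s) = (twist ^^ n) (g s)"
  by (induct n) (simp_all add: rigid_def twist_pow_in_stickers)

lemma rigid_one: "rigid \<one>\<^bsub>SymSt\<^esub>"
  by (simp add: rigid_def BijGroup_def id_Bij twist_in_stickers)

lemma rigid_mult:
  assumes "rigid f" "rigid g"
  shows "rigid (f \<otimes>\<^bsub>SymSt\<^esub> g)"
proof -
  have "f \<otimes>\<^bsub>SymSt\<^esub> g \<in> Bij stickers"
    using Sym.m_closed[OF rigid_carrier rigid_carrier, OF assms] by (simp only: carrier_SymSt)
  then show ?thesis
    using assms by (simp add: rigid_def BijGroup_mult_apply twist_in_stickers rigid_in_stickers)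
qed

lemma rigid_inv:
  assumes g: "rigid g"
  shows "rigid (inv\<^bsub>SymSt\<^esub> g)"
  unfolding rigid_def
proof
  have gB: "g \<in> Bij stickers" using g by (rule rigid_Bij)
  show invB: "inv\<^bsub>SymSt\<^esub> g \<in> Bij stickers"
    using Sym.inv_closed[OF rigid_carrier[OF g]] by (simp only: carrier_SymSt)
  show "\<forall>s\<in>stickers. (inv\<^bsub>SymSt\<^esub> g) (twist s) = twist ((inv\<^bsub>SymSt\<^esub> g) s)"
  proof
    fix s assume s: "s \<in> stickers"
    define t where "t = (inv\<^bsub>SymSt\<^esub> g) s"
    have t: "t \<in> stickers" "g t = s"
      unfolding t_def using Bij_imp_funcset[OF invB] s BijGroup_inv_apply(2)[OF gB s] by auto
    have "(inv\<^bsub>SymSt\<^esub> g) (twist s) = (inv\<^bsub>SymSt\<^esub> g) (g (twist t))"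
      using g t by (simp add: rigid_def)
    also have "\<dots> = twist t" using BijGroup_inv_apply(1)[OF gB twist_in_stickers[OF t(1)]] .
    finally show "(inv\<^bsub>SymSt\<^esub> g) (twist s) = twist ((inv\<^bsub>SymSt\<^esub> g) s)" unfolding t_def .
  qed
qed

definition corner_map :: "(sticker \<Rightarrow> sticker) \<Rightarrow> vec3 \<Rightarrow> vec3" where
  "corner_map g p = fst (g (vert_sticker p))"

lemma fst_rigid:
  assumes g: "rigid g" and s: "s \<in> stickers"
  shows "fst (g s) = corner_map g (fst s)"
proof -
  have v: "vert_sticker (fst s) \<in> stickers" using vert_sticker_in_stickers fst_in_corners s by blast
  have "g s = (twist ^^ orientation s) (g (vert_sticker (fst s)))"
    using sticker_from_orientation[OF s] rigid_twist_pow[OF g v] by metis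
  then show ?thesis using twist_pow_in_stickers rigid_in_stickers[OF g v] by (simp add: corner_map_def)
qed

lemma corner_map_in_corners: "rigid g \<Longrightarrow> p \<in> corners \<Longrightarrow> corner_map g p \<in> corners"
  unfolding corner_map_def using rigid_in_stickers vert_sticker_in_stickers fst_in_corners by blast

lemma phi_eq_corner_map: "i \<in> {1..8} \<Longrightarrow> phi g i = corner_index (corner_map g (corner_pos i))"
  by (simp add: phi_def corner_map_def vert_sticker_def)

lemma phi_outside: "i \<notin> {1..8} \<Longrightarrow> phi g i = i"
  unfolding phi_def by (rule if_not_P)

lemma phi_in_range: "rigid g \<Longrightarrow> i \<in> {1..8} \<Longrightarrow> phi g i \<in> {1..8}"
  by (metis phi_eq_corner_map corner_index_range corner_map_in_corners corner_pos_spec(1))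

lemma corner_map_corner_pos:
  "rigid g \<Longrightarrow> i \<in> {1..8} \<Longrightarrow> corner_map g (corner_pos i) = corner_pos (phi g i)"
  by (metis phi_eq_corner_map corner_pos_corner_index corner_map_in_corners corner_pos_spec(1))

lemma phi_mult:
  assumes f: "rigid f" and g: "rigid g"
  shows "phi (f \<otimes>\<^bsub>SymSt\<^esub> g) = phi f \<circ> phi g"
proof
  fix i
  show "phi (f \<otimes>\<^bsub>SymSt\<^esub> g) i = (phi f \<circ> phi g) i"
  proof (cases "i \<in> {1..8}")
    case i: True
    have v: "vert_sticker (corner_pos i) \<in> stickers" using vert_sticker_corner_pos[OF i] .
    have "phi (f \<otimes>\<^bsub>SymSt\<^esub> g) i = corner_index (corner_map (f \<otimes>\<^bsub>SymSt\<^esub> g) (corner_pos i))"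
      using i by (rule phi_eq_corner_map)
    also have "corner_map (f \<otimes>\<^bsub>SymSt\<^esub> g) (corner_pos i) = corner_map f (corner_map g (corner_pos i))"
      using fst_rigid[OF f rigid_in_stickers[OF g v]] v f g
      by (simp add: corner_map_def BijGroup_mult_apply rigid_Bij)
    also have "\<dots> = corner_map f (corner_pos (phi g i))"
      using corner_map_corner_pos[OF g i] by simp
    also have "corner_index \<dots> = phi f (phi g i)"
      using phi_eq_corner_map[OF phi_in_range[OF g i]] by simp
    finally show ?thesis by simp
  qed (simp add: phi_outside)
qed

lemma phi_one: "phi \<one>\<^bsub>SymSt\<^esub> = id"
proof
  fix i
  show "phi \<one>\<^bsub>SymSt\<^esub> i = id i"
    by (cases "i \<in> {1..8}")
      (simp_all add: phi_eq_corner_map phi_outside corner_map_def vert_sticker_corner_pos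
        BijGroup_one_apply corner_pos_spec)
qed

lemma phi_permutes:
  assumes g: "rigid g"
  shows "phi g permutes {1..8}"
proof -
  let ?h = "phi (inv\<^bsub>SymSt\<^esub> g)"
  have "g \<in> carrier SymSt" using g by (rule rigid_carrier)
  then have inverse: "phi g \<circ> ?h = id" "?h \<circ> phi g = id"
    using phi_mult[OF g rigid_inv[OF g]] phi_mult[OF rigid_inv[OF g] g] phi_one by simp_all
  show ?thesis
    unfolding permutes_def
  proof (intro conjI allI impI)
    fix y
    show "\<exists>!x. phi g x = y"
      using fun_cong[OF inverse(1), of y] fun_cong[OF inverse(2)] by (metis comp_apply id_apply)
  qed (rule phi_outside)
qed

lemma phi_permutation: "rigid g \<Longrightarrow> permutation (phi g)"
  using phi_permutes permutes_imp_permutation by blast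

lemma phi_eqI:
  assumes "\<forall>p\<in>corners. corner_index (corner_map g p) = q (corner_index p)"
    and "\<And>i. i \<notin> {1..8} \<Longrightarrow> q i = i"
  shows "phi g = q"
proof
  fix i
  show "phi g i = q i"
    using assms corner_pos_spec[of i] phi_eq_corner_map[of i g] phi_outside[of i g] by metis
qed

lemma cube_move_Bij:
  assumes m: "m \<in> cube_moves"
  shows "m \<in> Bij stickers"
proof -
  have "m \<in> extensional stickers"
    using m
    unfolding cube_moves_def mv_u_def mv_d_def mv_f_def mv_b_def mv_l_def mv_r_def face_move_def
    by auto
  moreover have "bij_betw m stickers stickers"
    by (rule bij_betw_byWitness[where f' = "\<lambda>s. m (m (m s))"])
      (simp_all add: cube_moves_order_4[OF m] image_subset_iff)
  ultimately show ?thesis by (simp add: Bij_def)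
qed

lemma cube_move_rigid: "m \<in> cube_moves \<Longrightarrow> rigid m"
  by (simp add: rigid_def cube_move_Bij cube_moves_commute_twist)

lemma cube_moves_carrier: "cube_moves \<subseteq> carrier SymSt"
  using cube_move_Bij carrier_SymSt by auto

lemma G2_rigid: "g \<in> G2_set \<Longrightarrow> rigid g"
  unfolding G2_set_def
  by (induct rule: generate.induct) (auto simp: rigid_one rigid_mult rigid_inv cube_move_rigid)

lemma G2_subgroup: "subgroup G2_set SymSt"
  unfolding G2_set_def by (rule Sym.generate_is_subgroup[OF cube_moves_carrier])

lemma group_G2: "group G2"
  unfolding G2_def using G2_subgroup group_BijGroup by (rule subgroup.subgroup_is_group)

lemma G2_simps [simp]:
  "carrier G2 = G2_set" "x \<otimes>\<^bsub>G2\<^esub> y = x \<otimes>\<^bsub>SymSt\<^esub> y" "\<one>\<^bsub>G2\<^esub> = \<one>\<^bsub>SymSt\<^esub>"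
  by (simp_all add: G2_def)

lemma G2_inv: "x \<in> G2_set \<Longrightarrow> inv\<^bsub>G2\<^esub> x = inv\<^bsub>SymSt\<^esub> x"
  unfolding G2_def using G2_subgroup by simp

lemma phi_hom: "group_hom G2 (sym_group 8) phi"
proof (intro group_hom.intro group_hom_axioms.intro group_G2 sym_group_is_group homI)
  fix x y assume "x \<in> carrier G2" "y \<in> carrier G2"
  then show "phi x \<in> carrier (sym_group 8)"
    and "phi (x \<otimes>\<^bsub>G2\<^esub> y) = phi x \<otimes>\<^bsub>sym_group 8\<^esub> phi y"
    using phi_permutes phi_mult G2_rigid by (simp_all add: sym_group_carrier sym_group_mult)
qed

section \<open>Parity\<close>

lemma phi_cube_moves:
  "phi mv_u = transpose 1 3 \<circ> transpose 3 4 \<circ> transpose 4 2"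
  "phi mv_d = transpose 5 6 \<circ> transpose 6 8 \<circ> transpose 8 7"
  "phi mv_f = transpose 1 2 \<circ> transpose 2 6 \<circ> transpose 6 5"
  "phi mv_b = transpose 3 7 \<circ> transpose 7 8 \<circ> transpose 8 4"
  "phi mv_l = transpose 1 5 \<circ> transpose 5 7 \<circ> transpose 7 3"
  "phi mv_r = transpose 2 4 \<circ> transpose 4 8 \<circ> transpose 8 6"
  by (rule phi_eqI;
      auto simp: corners_enum corner_map_def vert_sticker_def cube_move_eval corner_index_def
        transpose_def)+

lemma cube_move_odd: "m \<in> cube_moves \<Longrightarrow> \<not> evenperm (phi m)"
  unfolding cube_moves_def
  by (auto simp: phi_cube_moves evenperm_comp permutation_compose permutation_swap_id evenperm_swap)

abbreviation cube_gens :: "(sticker \<Rightarrow> sticker) set" where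
  "cube_gens \<equiv> cube_moves \<union> (\<lambda>g. inv\<^bsub>SymSt\<^esub> g) ` cube_moves"

lemma cube_gens_G2: "x \<in> cube_gens \<Longrightarrow> x \<in> G2_set"
  unfolding G2_set_def by (auto intro: generate.incl generate.inv)

lemma cube_gen_odd:
  assumes "x \<in> cube_gens"
  shows "\<not> evenperm (phi x)"
proof (cases "x \<in> cube_moves")
  case True
  then show ?thesis by (rule cube_move_odd)
next
  case False
  then obtain m where m: "m \<in> cube_moves" and x: "x = inv\<^bsub>SymSt\<^esub> m" using assms by blast
  have rigid: "rigid m" "rigid x" using cube_move_rigid[OF m] rigid_inv x by auto
  have "phi x \<circ> phi m = id"
    using phi_mult[OF rigid(2,1)] phi_one Sym.l_inv rigid_carrier[OF rigid(1)] x by simp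
  then have "evenperm (phi x) = evenperm (phi m)"
    using evenperm_comp[OF phi_permutation phi_permutation, OF rigid(2,1)] by simp
  then show ?thesis using cube_move_odd[OF m] by simp
qed

lemma word_eval_simps [simp]:
  "word_eval [] = \<one>\<^bsub>SymSt\<^esub>" "word_eval (x # w) = x \<otimes>\<^bsub>SymSt\<^esub> word_eval w"
  by (simp_all add: word_eval_def)

lemma word_eval_carrier: "set w \<subseteq> carrier SymSt \<Longrightarrow> word_eval w \<in> carrier SymSt"
  by (induct w) simp_all

lemma word_eval_apply:
  "set w \<subseteq> carrier SymSt \<Longrightarrow> s \<in> stickers \<Longrightarrow> word_eval w s = foldr (\<circ>) w id s"
  by (induct w) (simp_all add: carrier_SymSt BijGroup_one_apply BijGroup_mult_apply
      word_eval_carrier[unfolded carrier_SymSt])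

lemma word_eval_append:
  "set v \<subseteq> carrier SymSt \<Longrightarrow> set w \<subseteq> carrier SymSt \<Longrightarrow>
     word_eval (v @ w) = word_eval v \<otimes>\<^bsub>SymSt\<^esub> word_eval w"
  by (induct v) (simp_all add: word_eval_carrier Sym.m_assoc)

lemma word_eval_G2: "set w \<subseteq> cube_gens \<Longrightarrow> word_eval w \<in> G2_set"
proof (induct w)
  case Nil
  show ?case using subgroup.one_closed[OF G2_subgroup] by simp
next
  case (Cons x w)
  then have "x \<in> G2_set" "word_eval w \<in> G2_set" using cube_gens_G2 by auto
  then show ?case using subgroup.m_closed[OF G2_subgroup] by simp
qed

lemma evenperm_phi_word_eval:
  "set w \<subseteq> cube_gens \<Longrightarrow> evenperm (phi (word_eval w)) \<longleftrightarrow> even (length w)"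
proof (induct w)
  case Nil
  then show ?case by (simp add: phi_one)
next
  case (Cons x w)
  have x: "rigid x" "\<not> evenperm (phi x)"
    using Cons.prems G2_rigid cube_gens_G2 cube_gen_odd by auto
  have w: "rigid (word_eval w)" "set w \<subseteq> cube_gens"
    using Cons.prems G2_rigid word_eval_G2 by auto
  have "evenperm (phi (word_eval (x # w))) \<longleftrightarrow> (evenperm (phi x) \<longleftrightarrow> evenperm (phi (word_eval w)))"
    unfolding word_eval_simps phi_mult[OF x(1) w(1)]
    by (rule evenperm_comp[OF phi_permutation phi_permutation, OF x(1) w(1)])
  then show ?case using Cons.hyps[OF w(2)] x(2) by simp
qed

lemma G2_word_eval: "g \<in> G2_set \<Longrightarrow> \<exists>w. set w \<subseteq> cube_gens \<and> word_eval w = g"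
  unfolding G2_set_def
proof (induct rule: generate.induct)
  case one
  show ?case by (intro exI[of _ "[]"]) simp
next
  case (incl h)
  then show ?case
    using cube_moves_carrier by (intro exI[of _ "[h]"]) auto
next
  case (inv h)
  then show ?case
    using cube_moves_carrier Sym.inv_closed by (intro exI[of _ "[inv\<^bsub>SymSt\<^esub> h]"]) auto
next
  case (eng h1 h2)
  then obtain v w where "set v \<subseteq> cube_gens" "word_eval v = h1" "set w \<subseteq> cube_gens" "word_eval w = h2"
    by blast
  moreover have "cube_gens \<subseteq> carrier SymSt"
    using cube_gens_G2 G2_subgroup subgroup.subset by blast
  ultimately show ?case
    using word_eval_append[of v w] by (intro exI[of _ "v @ w"]) auto
qed

lemma L_set_eq_even: "L_set = {g \<in> G2_set. evenperm (phi g)}"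
  unfolding L_set_def
  using word_eval_G2 evenperm_phi_word_eval G2_word_eval by blast

section \<open>Total twist\<close>

definition corner_orientation :: "(sticker \<Rightarrow> sticker) \<Rightarrow> nat \<Rightarrow> nat" where
  "corner_orientation g i = orientation (g (vert_sticker (corner_pos i)))"

definition total_twist :: "(sticker \<Rightarrow> sticker) \<Rightarrow> nat" where
  "total_twist g = (\<Sum>i\<in>{1..8}. corner_orientation g i)"

lemma corner_orientation_mult:
  assumes f: "rigid f" and g: "rigid g" and i: "i \<in> {1..8}"
  shows "corner_orientation (f \<otimes>\<^bsub>SymSt\<^esub> g) i =
           (corner_orientation f (phi g i) + corner_orientation g i) mod 3"
proof -
  define s where "s = g (vert_sticker (corner_pos i))"
  have v: "vert_sticker (corner_pos i) \<in> stickers" using vert_sticker_corner_pos[OF i] .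
  have v': "vert_sticker (corner_pos (phi g i)) \<in> stickers"
    using vert_sticker_corner_pos[OF phi_in_range[OF g i]] .
  have s: "s \<in> stickers" unfolding s_def using rigid_in_stickers[OF g v] .
  have "fst s = corner_pos (phi g i)"
    unfolding s_def using corner_map_corner_pos[OF g i] by (simp add: corner_map_def)
  then have "s = (twist ^^ orientation s) (vert_sticker (corner_pos (phi g i)))"
    using sticker_from_orientation[OF s] by simp
  then have "(f \<otimes>\<^bsub>SymSt\<^esub> g) (vert_sticker (corner_pos i)) =
               (twist ^^ orientation s) (f (vert_sticker (corner_pos (phi g i))))"
    using BijGroup_mult_apply[OF rigid_Bij rigid_Bij v, OF f g] rigid_twist_pow[OF f v']
    unfolding s_def by metis
  then show ?thesis
    using orientation_twist_pow[OF rigid_in_stickers[OF f v']]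
    by (simp add: corner_orientation_def s_def add.commute)
qed

lemma total_twist_mult:
  assumes f: "rigid f" and g: "rigid g"
  shows "total_twist (f \<otimes>\<^bsub>SymSt\<^esub> g) mod 3 = (total_twist f + total_twist g) mod 3"
proof -
  have "total_twist (f \<otimes>\<^bsub>SymSt\<^esub> g) =
          (\<Sum>i\<in>{1..8}. (corner_orientation f (phi g i) + corner_orientation g i) mod 3)"
    unfolding total_twist_def using corner_orientation_mult[OF f g] by (rule sum.cong[OF refl])
  then have "total_twist (f \<otimes>\<^bsub>SymSt\<^esub> g) mod 3 =
               ((\<Sum>i\<in>{1..8}. corner_orientation f (phi g i)) + total_twist g) mod 3"
    by (simp add: mod_sum_eq sum.distrib total_twist_def)
  moreover have "(\<Sum>i\<in>{1..8}. corner_orientation f (phi g i)) = total_twist f"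
    unfolding total_twist_def
    using sum.permute[OF phi_permutes[OF g], of "corner_orientation f"] by (simp add: comp_def)
  ultimately show ?thesis by simp
qed

lemma total_twist_one: "total_twist \<one>\<^bsub>SymSt\<^esub> = 0"
  by (simp add: total_twist_def corner_orientation_def BijGroup_one_apply vert_sticker_corner_pos
      orientation_def)

lemma total_twist_corners: "total_twist g = (\<Sum>p\<in>corners. orientation (g (vert_sticker p)))"
  unfolding total_twist_def corner_orientation_def
  using sum.reindex_bij_betw[OF bij_betw_corner_pos, of "\<lambda>p. orientation (g (vert_sticker p))"] .

lemma total_twist_cube_moves [rule_format]: "\<forall>m\<in>cube_moves. total_twist m mod 3 = 0"
  unfolding cube_moves_def ball_simps total_twist_corners corners_enum
  by (simp add: cube_move_eval vert_sticker_def orientation_def twist_def)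

lemma total_twist_inv:
  assumes g: "rigid g" and twist_g: "total_twist g mod 3 = 0"
  shows "total_twist (inv\<^bsub>SymSt\<^esub> g) mod 3 = 0"
proof -
  have "(total_twist (inv\<^bsub>SymSt\<^esub> g) + total_twist g) mod 3 = 0"
    using total_twist_mult[OF rigid_inv[OF g] g] Sym.l_inv[OF rigid_carrier[OF g]] total_twist_one
    by simp
  then show ?thesis using twist_g by presburger
qed

lemma total_twist_G2: "g \<in> G2_set \<Longrightarrow> total_twist g mod 3 = 0"
  unfolding G2_set_def
proof (induct rule: generate.induct)
  case (eng h1 h2)
  then have "rigid h1" "rigid h2" using G2_rigid unfolding G2_set_def by auto
  then show ?case using total_twist_mult eng.hyps(2,4) by presburger
qed (simp_all add: total_twist_one total_twist_cube_moves total_twist_inv cube_move_rigid)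

section \<open>Pure corner twists\<close>

definition corner_twist :: "(nat \<Rightarrow> nat) \<Rightarrow> sticker \<Rightarrow> sticker" where
  "corner_twist k = (\<lambda>s\<in>stickers. (twist ^^ k (corner_index (fst s))) s)"

lemma corner_twist_apply:
  "s \<in> stickers \<Longrightarrow> corner_twist k s = (twist ^^ k (corner_index (fst s))) s"
  by (simp add: corner_twist_def)

lemma corner_twist_in_stickers:
  "s \<in> stickers \<Longrightarrow> corner_twist k s \<in> stickers \<and> fst (corner_twist k s) = fst s"
  by (simp add: corner_twist_apply twist_pow_in_stickers)

lemma corner_twist_cong:
  assumes "\<forall>i\<in>{1..8}. k i mod 3 = k' i mod 3"
  shows "corner_twist k = corner_twist k'"
  unfolding corner_twist_def
proof (rule restrict_ext)
  fix s assume s: "s \<in> stickers"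
  then have "k (corner_index (fst s)) mod 3 = k' (corner_index (fst s)) mod 3"
    using assms corner_index_range fst_in_corners by blast
  then show "(twist ^^ k (corner_index (fst s))) s = (twist ^^ k' (corner_index (fst s))) s"
    using twist_pow_mod[OF s] by metis
qed

lemma corner_twist_comp:
  "s \<in> stickers \<Longrightarrow> corner_twist k (corner_twist l s) = corner_twist (\<lambda>i. k i + l i) s"
  using corner_twist_in_stickers[of s l] by (simp add: corner_twist_apply funpow_add)

lemma corner_twist_zero: "corner_twist (\<lambda>i. 0) = \<one>\<^bsub>SymSt\<^esub>"
  by (simp add: corner_twist_def BijGroup_def)

lemma corner_twist_Bij: "corner_twist k \<in> Bij stickers"
proof -
  let ?k' = "\<lambda>i. 2 * k i"
  have "corner_twist (\<lambda>i. ?k' i + k i) = corner_twist (\<lambda>i. 0)"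
       "corner_twist (\<lambda>i. k i + ?k' i) = corner_twist (\<lambda>i. 0)"
    by (simp_all add: corner_twist_cong)
  then have "corner_twist ?k' (corner_twist k s) = s" "corner_twist k (corner_twist ?k' s) = s"
    if "s \<in> stickers" for s
    using that corner_twist_comp corner_twist_zero BijGroup_one_apply by metis+
  then have "bij_betw (corner_twist k) stickers stickers"
    using corner_twist_in_stickers by (intro bij_betw_byWitness[where f' = "corner_twist ?k'"]) auto
  then show ?thesis by (simp add: Bij_def corner_twist_def)
qed

lemma corner_twist_rigid: "rigid (corner_twist k)"
  unfolding rigid_def
  using corner_twist_Bij twist_in_stickers fst_twist by (simp add: corner_twist_apply funpow_swap1)

lemma corner_twist_mult: "corner_twist k \<otimes>\<^bsub>SymSt\<^esub> corner_twist l = corner_twist (\<lambda>i. k i + l i)"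
proof (rule Bij_eqI)
  show "corner_twist k \<otimes>\<^bsub>SymSt\<^esub> corner_twist l \<in> Bij stickers"
    using Sym.m_closed[of "corner_twist k" "corner_twist l"] corner_twist_Bij
    by (simp only: carrier_SymSt)
  fix s assume "s \<in> stickers"
  then show "(corner_twist k \<otimes>\<^bsub>SymSt\<^esub> corner_twist l) s = corner_twist (\<lambda>i. k i + l i) s"
    using BijGroup_mult_apply[OF corner_twist_Bij corner_twist_Bij] corner_twist_comp by metis
qed (rule corner_twist_Bij)

lemma corner_twist_inv: "inv\<^bsub>SymSt\<^esub> (corner_twist k) = corner_twist (\<lambda>i. 2 * k i)"
proof (rule Sym.inv_equality)
  have "corner_twist (\<lambda>i. 2 * k i + k i) = corner_twist (\<lambda>i. 0)" by (simp add: corner_twist_cong)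
  then show "corner_twist (\<lambda>i. 2 * k i) \<otimes>\<^bsub>SymSt\<^esub> corner_twist k = \<one>\<^bsub>SymSt\<^esub>"
    by (simp add: corner_twist_mult corner_twist_zero)
qed (simp_all add: carrier_SymSt corner_twist_Bij)

lemma rigid_mult_corner_twist:
  assumes g: "rigid g" and k: "\<forall>i\<in>{1..8}. k' (phi g i) mod 3 = k i mod 3"
  shows "g \<otimes>\<^bsub>SymSt\<^esub> corner_twist k = corner_twist k' \<otimes>\<^bsub>SymSt\<^esub> g"
proof (rule Bij_eqI)
  show "g \<otimes>\<^bsub>SymSt\<^esub> corner_twist k \<in> Bij stickers"
    and "corner_twist k' \<otimes>\<^bsub>SymSt\<^esub> g \<in> Bij stickers"
    using Sym.m_closed rigid_carrier g corner_twist_rigid by (simp_all only: carrier_SymSt)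
  fix s assume s: "s \<in> stickers"
  define i where "i = corner_index (fst s)"
  have i: "i \<in> {1..8}" and s_corner: "fst s = corner_pos i"
    unfolding i_def using corner_index_range corner_pos_corner_index fst_in_corners s by auto
  have gs: "g s \<in> stickers" using rigid_in_stickers[OF g s] .
  have "corner_index (fst (g s)) = phi g i"
    using fst_rigid[OF g s] corner_map_corner_pos[OF g i] corner_pos_spec phi_in_range[OF g i]
    by (simp add: s_corner)
  then have "corner_twist k' (g s) = (twist ^^ k i) (g s)"
    using k i twist_pow_mod[OF gs] corner_twist_apply[OF gs] by metis
  also have "\<dots> = g (corner_twist k s)"
    using rigid_twist_pow[OF g s] corner_twist_apply[OF s] by (simp add: i_def)
  finally show "(g \<otimes>\<^bsub>SymSt\<^esub> corner_twist k) s = (corner_twist k' \<otimes>\<^bsub>SymSt\<^esub> g) s"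
    using g s corner_twist_Bij by (simp add: BijGroup_mult_apply rigid_Bij)
qed

lemma rigid_eq_corner_twist:
  assumes g: "rigid g" and phi_g: "phi g = id"
  shows "g = corner_twist (corner_orientation g)"
proof (rule Bij_eqI[OF rigid_Bij[OF g] corner_twist_Bij])
  fix s assume s: "s \<in> stickers"
  define i where "i = corner_index (fst s)"
  define v where "v = vert_sticker (corner_pos i)"
  have i: "i \<in> {1..8}" and s_corner: "fst s = corner_pos i"
    unfolding i_def using corner_index_range corner_pos_corner_index fst_in_corners s by auto
  have v: "v \<in> stickers" unfolding v_def using vert_sticker_corner_pos[OF i] .
  have s_eq: "s = (twist ^^ orientation s) v"
    using sticker_from_orientation[OF s] unfolding s_corner v_def .
  have "fst (g v) = corner_pos i"
    using corner_map_corner_pos[OF g i] phi_g by (simp add: corner_map_def v_def)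
  then have g_v: "g v = (twist ^^ corner_orientation g i) v"
    using sticker_from_orientation[OF rigid_in_stickers[OF g v]]
    unfolding corner_orientation_def v_def by simp
  have "g s = (twist ^^ orientation s) (g v)"
    using arg_cong[OF s_eq, of g] rigid_twist_pow[OF g v] by simp
  also have "\<dots> = (twist ^^ corner_orientation g i) ((twist ^^ orientation s) v)"
    unfolding g_v by (metis add.commute comp_apply funpow_add)
  also have "\<dots> = corner_twist (corner_orientation g) s"
    using corner_twist_apply[OF s] s_eq by (simp add: i_def)
  finally show "g s = corner_twist (corner_orientation g) s" .
qed

section \<open>Twists in normal subgroups\<close>

definition twist_word :: "(sticker \<Rightarrow> sticker) list" where
  "twist_word = [mv_l, mv_l, mv_l, mv_d, mv_f, mv_f, mv_f, mv_l, mv_f, mv_f, mv_f,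
                 mv_r, mv_r, mv_r, mv_u, mv_u, mv_f, mv_f, mv_r, mv_f]"

definition twist_1_2 :: "nat \<Rightarrow> nat" where
  "twist_1_2 i = (if i = 1 then 1 else if i = 2 then 2 else 0)"

lemma twist_word_apply [rule_format]:
  "\<forall>s\<in>stickers. foldr (\<circ>) twist_word id s = corner_twist twist_1_2 s"
  by (simp only: ball_stickers)
    (simp add: twist_word_def cube_move_eval corner_twist_def twist_1_2_def corner_index_def
      twist_def numeral_2_eq_2)

lemma corner_twist_1_2_G2: "corner_twist twist_1_2 \<in> G2_set"
proof -
  have moves: "set twist_word \<subseteq> cube_moves" by (simp add: twist_word_def cube_moves_def)
  then have carrier: "set twist_word \<subseteq> carrier SymSt" using cube_moves_carrier by blast
  have "word_eval twist_word = corner_twist twist_1_2"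
  proof (rule Bij_eqI[OF _ corner_twist_Bij])
    show "word_eval twist_word \<in> Bij stickers"
      using word_eval_carrier[OF carrier] by (simp only: carrier_SymSt)
  qed (simp add: word_eval_apply[OF carrier] twist_word_apply)
  then show ?thesis using word_eval_G2 moves by fastforce
qed

lemma corner_twist_commutator_in_normal:
  assumes N: "N \<lhd> G2" and n: "n \<in> N" and twist_G2: "corner_twist k \<in> G2_set"
    and k': "\<forall>i\<in>{1..8}. k' (phi n i) mod 3 = k i mod 3"
  shows "corner_twist (\<lambda>i. k' i + 2 * k i) \<in> N"
proof -
  interpret N: normal N G2 by (rule N)
  let ?t = "corner_twist k"
  have nG: "n \<in> G2_set" using N.subset n by auto
  have nc: "n \<in> carrier SymSt" and tc: "?t \<in> carrier SymSt"
    and t'c: "corner_twist k' \<in> carrier SymSt"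
    using rigid_carrier G2_rigid nG corner_twist_rigid by blast+
  have "?t \<otimes>\<^bsub>G2\<^esub> inv\<^bsub>G2\<^esub> n \<otimes>\<^bsub>G2\<^esub> inv\<^bsub>G2\<^esub> ?t \<in> N"
    using N.inv_op_closed2 twist_G2 N.m_inv_closed n by simp
  then have "n \<otimes>\<^bsub>SymSt\<^esub> (?t \<otimes>\<^bsub>SymSt\<^esub> inv\<^bsub>SymSt\<^esub> n \<otimes>\<^bsub>SymSt\<^esub> inv\<^bsub>SymSt\<^esub> ?t) \<in> N"
    using subgroup.m_closed[OF N.is_subgroup n] G2_inv nG twist_G2 by simp
  also have "n \<otimes>\<^bsub>SymSt\<^esub> (?t \<otimes>\<^bsub>SymSt\<^esub> inv\<^bsub>SymSt\<^esub> n \<otimes>\<^bsub>SymSt\<^esub> inv\<^bsub>SymSt\<^esub> ?t) =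
               (n \<otimes>\<^bsub>SymSt\<^esub> ?t) \<otimes>\<^bsub>SymSt\<^esub> inv\<^bsub>SymSt\<^esub> n \<otimes>\<^bsub>SymSt\<^esub> inv\<^bsub>SymSt\<^esub> ?t"
    using nc tc by (simp add: Sym.m_assoc)
  also have "\<dots> = corner_twist k' \<otimes>\<^bsub>SymSt\<^esub> inv\<^bsub>SymSt\<^esub> ?t"
    unfolding rigid_mult_corner_twist[OF G2_rigid[OF nG] k'] using nc tc t'c
    by (simp add: Sym.m_assoc)
  also have "\<dots> = corner_twist (\<lambda>i. k' i + 2 * k i)"
    by (simp add: corner_twist_inv corner_twist_mult)
  finally show ?thesis .
qed

lemma corner_twist_three_cycle_in_normal:
  assumes N: "N \<lhd> G2" and cycles: "three_cycles 8 \<subseteq> phi ` N"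
    and cs: "cycle cs" "length cs = 3" "set cs \<subseteq> {1..8}"
    and k': "\<forall>i\<in>{1..8}. k' (cycle_of_list cs i) mod 3 = twist_1_2 i mod 3"
    and k: "\<forall>i\<in>{1..8}. (k' i + 2 * twist_1_2 i) mod 3 = k i mod 3"
  shows "corner_twist k \<in> N"
proof -
  have "cycle_of_list cs \<in> three_cycles 8" using cs by (intro CollectI exI[of _ cs]) simp
  then have "cycle_of_list cs \<in> phi ` N" by (rule subsetD[OF cycles])
  then obtain n where n: "cycle_of_list cs = phi n" "n \<in> N" by (rule imageE)
  have "corner_twist (\<lambda>i. k' i + 2 * twist_1_2 i) \<in> N"
    using corner_twist_commutator_in_normal[OF N n(2) corner_twist_1_2_G2] k' unfolding n(1) .
  then show ?thesis unfolding corner_twist_cong[OF k] .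
qed

text \<open>Twist vectors are read mod 3, so \<open>2\<close> stands for \<open>-1\<close>.\<close>
definition unit_twist :: "nat \<Rightarrow> nat \<Rightarrow> nat" where
  "unit_twist j i = (if i = j then 1 else if i = 1 then 2 else 0)"

lemma unit_twist_in_normal:
  assumes N: "N \<lhd> G2" and cycles: "three_cycles 8 \<subseteq> phi ` N" and j: "j \<in> {2..8}"
  shows "corner_twist (unit_twist j) \<in> N"
proof -
  have upper: "corner_twist (unit_twist j) \<in> N"
    if "j \<in> {3..8}" "c \<in> {3..8}" "c \<noteq> j" for j c
    by (rule corner_twist_three_cycle_in_normal[OF N cycles,
          of "[1, j, c]" "\<lambda>i. if i = j then 1 else if i = 2 then 2 else 0"])
      (use that in \<open>simp_all add: transpose_def twist_1_2_def unit_twist_def\<close>)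
  \<comment> \<open>A 3-cycle fixing corner 2 cannot move corner 1 to corner 2: go through \<open>(2 3 4)\<close> and \<open>j = 3\<close>.\<close>
  have "corner_twist (\<lambda>i. if i = 2 then 1 else if i = 3 then 2 else 0) \<in> N"
    by (rule corner_twist_three_cycle_in_normal[OF N cycles,
          of "[2, 3, 4]" "\<lambda>i. if i = 1 then 1 else if i = 3 then 2 else 0"])
      (simp_all add: atLeastAtMost_1_8 transpose_def twist_1_2_def)
  then have "corner_twist (\<lambda>i. (if i = 2 then 1 else if i = 3 then 2 else 0) + unit_twist 3 i) \<in> N"
    using upper[of 3 4] subgroup.m_closed[OF normal_imp_subgroup[OF N]] corner_twist_mult by fastforce
  moreover have "corner_twist (\<lambda>i. (if i = 2 then 1 else if i = 3 then 2 else 0) + unit_twist 3 i) =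
                 corner_twist (unit_twist 2)"
    by (rule corner_twist_cong) (simp add: unit_twist_def)
  ultimately have two: "corner_twist (unit_twist 2) \<in> N" by simp
  show ?thesis
  proof (cases "j = 2")
    case False
    then show ?thesis using j upper[of j "if j = 3 then 4 else 3"] by auto
  qed (simp add: two)
qed

lemma corner_twist_lin_comb_in_normal:
  assumes N: "N \<lhd> G2" and J: "finite J" and v: "\<forall>j\<in>J. corner_twist (v j) \<in> N"
  shows "corner_twist (\<lambda>i. \<Sum>j\<in>J. c j * v j i) \<in> N"
proof -
  have add: "corner_twist (\<lambda>i. a i + b i) \<in> N" if "corner_twist a \<in> N" "corner_twist b \<in> N" for a b
    using subgroup.m_closed[OF normal_imp_subgroup[OF N] that] by (simp add: corner_twist_mult)
  have zero: "corner_twist (\<lambda>i. 0) \<in> N"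
    using subgroup.one_closed[OF normal_imp_subgroup[OF N]] by (simp add: corner_twist_zero)
  from J v show ?thesis
  proof (induct J rule: finite_induct)
    case empty
    show ?case using zero by simp
  next
    case (insert j J)
    have "corner_twist (\<lambda>i. m * v j i) \<in> N" for m
    proof (induct m)
      case (Suc m)
      then have "corner_twist (\<lambda>i. m * v j i + v j i) \<in> N" using add insert.prems by simp
      then show ?case by (simp add: add.commute)
    qed (simp add: zero)
    then show ?case using insert add by simp
  qed
qed

lemma corner_twist_in_normal:
  assumes N: "N \<lhd> G2" and cycles: "three_cycles 8 \<subseteq> phi ` N"
    and k: "(\<Sum>i\<in>{1..8}. k i) mod 3 = 0"
  shows "corner_twist k \<in> N"
proof -
  have "corner_twist (\<lambda>i. \<Sum>j\<in>{2..8}. k j * unit_twist j i) \<in> N"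
    using unit_twist_in_normal[OF N cycles] by (intro corner_twist_lin_comb_in_normal[OF N]) auto
  moreover have "corner_twist (\<lambda>i. \<Sum>j\<in>{2..8}. k j * unit_twist j i) = corner_twist k"
  proof (rule corner_twist_cong, rule ballI)
    fix i :: nat assume i: "i \<in> {1..8}"
    show "(\<Sum>j\<in>{2..8}. k j * unit_twist j i) mod 3 = k i mod 3"
    proof (cases "i = 1")
      case True
      define t where "t = (\<Sum>j\<in>{2..8}. k j)"
      have "(\<Sum>i\<in>{1..8}. k i) = k 1 + t"
        unfolding t_def by (simp add: sum.atLeast_Suc_atMost numeral_2_eq_2)
      then have "(2 * t) mod 3 = k 1 mod 3" using k by presburger
      moreover have "(\<Sum>j\<in>{2..8}. k j * unit_twist j i) = 2 * t"
        unfolding t_def sum_distrib_left using True by (intro sum.cong) (auto simp: unit_twist_def)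
      ultimately show ?thesis using True by simp
    next
      case False
      then have "(\<Sum>j\<in>{2..8}. k j * unit_twist j i) = (\<Sum>j\<in>{2..8}. if i = j then k j else 0)"
        by (intro sum.cong) (auto simp: unit_twist_def)
      also have "\<dots> = k i" using i False by simp
      finally show ?thesis by simp
    qed
  qed
  ultimately show ?thesis by simp
qed

lemma phi_kernel_subset_normal:
  assumes N: "N \<lhd> G2" and cycles: "three_cycles 8 \<subseteq> phi ` N"
  shows "kernel G2 (sym_group 8) phi \<subseteq> N"
proof
  fix g assume "g \<in> kernel G2 (sym_group 8) phi"
  then have g: "g \<in> G2_set" "phi g = id" by (simp_all add: kernel_def sym_group_one)
  then have "g = corner_twist (corner_orientation g)"
    using G2_rigid rigid_eq_corner_twist by blast
  moreover have "corner_twist (corner_orientation g) \<in> N"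
    using corner_twist_in_normal[OF N cycles] total_twist_G2[OF g(1)]
    by (simp add: total_twist_def)
  ultimately show "g \<in> N" by simp
qed

theorem proposition2p9:
  fixes N :: "(sticker \<Rightarrow> sticker) set"
  assumes "N \<lhd> G2"
    and "N \<noteq> {\<one>\<^bsub>G2\<^esub>}"
    and "(sym_group 8)\<lparr>carrier := phi ` N\<rparr> \<cong> alt_group 8"
  shows "N = L_set"
proof -
  \<comment> \<open>The hypothesis \<open>N \<noteq> {\<one>}\<close> is implied by the third one and not needed.\<close>
  interpret phi: group_hom G2 "sym_group 8" phi by (rule phi_hom)
  have N: "subgroup N G2" using assms(1) by (rule normal_imp_subgroup)
  have "subgroup (phi ` N) (sym_group 8)" by (rule phi.subgroup_img_is_subgroup[OF N])
  moreover have "2 * card (phi ` N) = fact 8"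
    using iso_same_card[OF assms(3)] alt_group_card_carrier[of 8] by simp
  ultimately have A8: "phi ` N = carrier (alt_group 8)" by (rule sym_group_index_two_subgroup_eq_alt)
  then have "kernel G2 (sym_group 8) phi \<subseteq> N"
    using phi_kernel_subset_normal[OF assms(1)] three_cycles_incl by blast
  then have "N = {g \<in> G2_set. phi g \<in> phi ` N}"
    using phi.preimage_image_eq_if_kernel_subset[OF N] by simp
  also have "\<dots> = L_set"
    unfolding L_set_eq_even A8 alt_group_carrier using phi_permutes G2_rigid by blast
  finally show ?thesis .
qed

end
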